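(* Let $t,t'\in B_n$ with $t\neq t'$ and let $G$ be a digraph such that $\mathbb{A}(G)$ satisfies $t\approx t'$. Then $O_G\le Y_{t,t'}+1$.
   Context: Digraphs $G=(V,E)$ have $E\subseteq V\times V$, loops allowed, possibly infinite. $\mathbb{A}(G)$ is the groupoid on $V\cup\{\infty\}$ with $xy=x$ if $x,y\in V$, $(x,y)\in E$, and $xy=\infty$ otherwise. $B_n$: binary terms with $x_1,\dots,x_n$ each occurring once in this order; $G(t)$: rooted tree defined by $G(x_i)$ a single vertex and $G(t_1t_2)=G(t_1)\cup G(t_2)$ plus an edge from the leftmost variable of $t_1$ to that of $t_2$; root $x_1$. For a rooted tree $T$, $T_x$ is the rooted induced subtree of $x$ and its descendants, $h$ denotes height. With $T=G(t)$, $T'=G(t')$: $Y_{t,t'}$ is the largest integer $m$ such that for all $x$, if $h(T_x)\le m$ or $h(T'_x)\le m$ then $T_x=T'_x$. A strongly connected component (SCC) is trivial if it is a single vertex without a loop, nontrivial otherwise. A path $v_0\to\dots\to v_\ell$ is an outlet from a nontrivial SCC $K$ if $v_0\in K$ and $v_1,\dots,v_\ell$ lie in trivial SCCs. $O_G$ is the maximal length of an outlet ($\infty$ if unbounded, $-\infty$ if none). *)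

theory Defs
  imports Complex_Main "HOL-Library.Extended_Real"
begin

datatype bterm = Var nat | App bterm bterm

primrec leaves :: "bterm \<Rightarrow> nat list" where
  "leaves (Var i) = [i]"
| "leaves (App a b) = leaves a @ leaves b"

primrec leftmost :: "bterm \<Rightarrow> nat" where
  "leftmost (Var i) = i"
| "leftmost (App a b) = leftmost a"

definition B :: "nat \<Rightarrow> bterm set" where
  "B n = {t. leaves t = [1..<n+1]}"

primrec tedges :: "bterm \<Rightarrow> (nat \<times> nat) set" where
  "tedges (Var i) = {}"
| "tedges (App a b) = tedges a \<union> tedges b \<union> {(leftmost a, leftmost b)}"

definition tverts :: "bterm \<Rightarrow> nat set" where
  "tverts t = set (leaves t)"

definition desc :: "bterm \<Rightarrow> nat \<Rightarrow> nat set" where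
  "desc t x = {y. (x, y) \<in> (tedges t)\<^sup>*}"

definition subtree :: "bterm \<Rightarrow> nat \<Rightarrow> nat set \<times> (nat \<times> nat) set" where
  "subtree t x = (desc t x, tedges t \<inter> (desc t x \<times> desc t x))"

definition height :: "bterm \<Rightarrow> nat \<Rightarrow> nat" where
  "height t x = (GREATEST k. \<exists>y. (x, y) \<in> (tedges t) ^^ k)"

definition Y :: "bterm \<Rightarrow> bterm \<Rightarrow> int" where
  "Y t t' = (GREATEST m::int. \<forall>x \<in> tverts t.
       (int (height t x) \<le> m \<or> int (height t' x) \<le> m) \<longrightarrow> subtree t x = subtree t' x)"

text \<open>Carrier V \<union> {\<infinity>} is represented as Some ` V \<union> {None}, with None = \<infinity>.\<close>
fun gmult :: "('v \<times> 'v) set \<Rightarrow> 'v option \<Rightarrow> 'v option \<Rightarrow> 'v option" where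
  "gmult E (Some x) (Some y) = (if (x, y) \<in> E then Some x else None)"
| "gmult E _ _ = None"

primrec eval :: "('v \<times> 'v) set \<Rightarrow> (nat \<Rightarrow> 'v option) \<Rightarrow> bterm \<Rightarrow> 'v option" where
  "eval E \<sigma> (Var i) = \<sigma> i"
| "eval E \<sigma> (App a b) = gmult E (eval E \<sigma> a) (eval E \<sigma> b)"

definition satisfies :: "'v set \<Rightarrow> ('v \<times> 'v) set \<Rightarrow> bterm \<Rightarrow> bterm \<Rightarrow> bool" where
  "satisfies V E t t' \<longleftrightarrow>
     (\<forall>\<sigma>. (\<forall>i. \<sigma> i \<in> Some ` V \<union> {None}) \<longrightarrow> eval E \<sigma> t = eval E \<sigma> t')"

definition is_scc :: "'v set \<Rightarrow> ('v \<times> 'v) set \<Rightarrow> 'v set \<Rightarrow> bool" where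
  "is_scc V E K \<longleftrightarrow> K \<noteq> {} \<and> K \<subseteq> V \<and>
     (\<forall>u \<in> K. K = {v \<in> V. (u, v) \<in> E\<^sup>* \<and> (v, u) \<in> E\<^sup>*})"

definition trivial_scc :: "('v \<times> 'v) set \<Rightarrow> 'v set \<Rightarrow> bool" where
  "trivial_scc E K \<longleftrightarrow> (\<exists>v. K = {v} \<and> (v, v) \<notin> E)"

definition nontrivial_scc :: "'v set \<Rightarrow> ('v \<times> 'v) set \<Rightarrow> 'v set \<Rightarrow> bool" where
  "nontrivial_scc V E K \<longleftrightarrow> is_scc V E K \<and> \<not> trivial_scc E K"

definition in_trivial_scc :: "'v set \<Rightarrow> ('v \<times> 'v) set \<Rightarrow> 'v \<Rightarrow> bool" where
  "in_trivial_scc V E v \<longleftrightarrow> (\<exists>K. is_scc V E K \<and> trivial_scc E K \<and> v \<in> K)"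

text \<open>A path v_0 -> ... -> v_l is a nonempty vertex list; its length is l.\<close>
definition is_path :: "'v set \<Rightarrow> ('v \<times> 'v) set \<Rightarrow> 'v list \<Rightarrow> bool" where
  "is_path V E vs \<longleftrightarrow> vs \<noteq> [] \<and> set vs \<subseteq> V \<and>
     (\<forall>i. Suc i < length vs \<longrightarrow> (vs ! i, vs ! Suc i) \<in> E)"

definition is_outlet :: "'v set \<Rightarrow> ('v \<times> 'v) set \<Rightarrow> 'v set \<Rightarrow> 'v list \<Rightarrow> bool" where
  "is_outlet V E K vs \<longleftrightarrow> nontrivial_scc V E K \<and> is_path V E vs \<and> hd vs \<in> K \<and>
     (\<forall>v \<in> set (tl vs). in_trivial_scc V E v)"

text \<open>O_G: supremum of outlet lengths; -\<infinity> if there is none, \<infinity> if unbounded.\<close>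
definition O_G :: "'v set \<Rightarrow> ('v \<times> 'v) set \<Rightarrow> ereal" where
  "O_G V E = Sup {ereal (real (length vs - 1)) | vs K. is_outlet V E K vs}"

end

theory Submission
  imports Defs
begin

text \<open>
  Suppose an outlet \<open>v\<^sub>0 \<rightarrow> \<dots> \<rightarrow> v\<^sub>l\<close> leaves a nontrivial component with
  \<open>l \<ge> Y t t' + 2\<close>, and let \<open>z\<close> be a vertex with \<open>h(T\<^sub>z) < l\<close>. Map \<open>G(t)\<close> into \<open>G\<close> by sending
  \<open>T\<^sub>z\<close> level by level down the outlet (\<open>z\<close> to \<open>v\<^sub>1\<close>) and every other vertex, according
  to its depth, around a closed walk through \<open>v\<^sub>0\<close>, timed so that the parent of \<open>z\<close>
  goes to \<open>v\<^sub>0\<close>. This is a homomorphism, so \<open>t\<close> evaluates to a vertex under it, hence so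
  does \<open>t'\<close>, i.e. it is also a homomorphism of \<open>G(t')\<close>. An edge of \<open>G(t')\<close> leaving \<open>T\<^sub>z\<close>
  would then join some \<open>v\<^sub>i\<close>, \<open>i \<ge> 1\<close>, to a vertex from which \<open>v\<^sub>0\<close> and hence \<open>v\<^sub>i\<close>
  is reachable, which is impossible in a trivial component. So \<open>T\<^sub>z\<close> is closed under
  the edges of \<open>G(t')\<close>, and symmetrically. Induction on heights then shows
  \<open>T\<^sub>x = T'\<^sub>x\<close> whenever one of the two heights is at most \<open>Y t t' + 1\<close>, contradicting
  the maximality of \<open>Y t t'\<close>.
\<close>

abbreviation sorted_leaves :: "bterm \<Rightarrow> bool" where
  "sorted_leaves t \<equiv> sorted_wrt (<) (leaves t)"

lemma leftmost_in_leaves: "leftmost t \<in> set (leaves t)"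
  by (induction t) auto

lemma leaves_ne_Nil: "leaves t \<noteq> []"
  using leftmost_in_leaves[of t] by auto

lemma hd_leaves: "hd (leaves t) = leftmost t"
  by (induction t) (simp_all add: leaves_ne_Nil)

lemma leftmost_le: "sorted_leaves t \<Longrightarrow> v \<in> set (leaves t) \<Longrightarrow> leftmost t \<le> v"
proof (induction t)
  case (App a b)
  then show ?case
    using leftmost_in_leaves[of a] by (auto simp: sorted_wrt_append intro: less_imp_le)
qed simp

lemma tedges_subset_leaves: "tedges t \<subseteq> set (leaves t) \<times> set (leaves t)"
  by (induction t) (auto simp: leftmost_in_leaves)

lemma tedges_less: "sorted_leaves t \<Longrightarrow> (u, v) \<in> tedges t \<Longrightarrow> u < v"
proof (induction t)
  case (App a b)
  then show ?case
    using leftmost_in_leaves[of a] leftmost_in_leaves[of b] by (auto simp: sorted_wrt_append)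
qed simp

lemma rtrancl_tedges_le:
  assumes "sorted_leaves t" and "(u, v) \<in> (tedges t)\<^sup>*"
  shows "u \<le> v"
  using assms(2) by (induction rule: rtrancl_induct) (auto dest: tedges_less[OF assms(1)])

lemma tedges_parent_unique:
  "sorted_leaves t \<Longrightarrow> (u, v) \<in> tedges t \<Longrightarrow> (u', v) \<in> tedges t \<Longrightarrow> u = u'"
proof (induction t)
  case (App a b)
  have sb: "sorted_leaves b" and ab: "\<forall>x\<in>set (leaves a). \<forall>y\<in>set (leaves b). x < y"
    using App.prems(1) by (auto simp: sorted_wrt_append)
  have "(x, leftmost b) \<notin> tedges b" for x
    using tedges_less[OF sb, of x] tedges_subset_leaves[of b] leftmost_le[OF sb, of x] by fastforce
  moreover have "x \<notin> set (leaves a)" if "x \<in> set (leaves b)" for x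
    using ab that by blast
  ultimately show ?case
    using App tedges_subset_leaves[of a] tedges_subset_leaves[of b] leftmost_in_leaves[of b]
    by (simp add: sorted_wrt_append) blast
qed simp

lemma relpow_tedges_add_le:
  assumes "sorted_leaves t"
  shows "(u, v) \<in> tedges t ^^ k \<Longrightarrow> u + k \<le> v"
proof (induction k arbitrary: v)
  case (Suc k)
  then obtain w where "(u, w) \<in> tedges t ^^ k" "(w, v) \<in> tedges t"
    by auto
  then show ?case
    using Suc.IH tedges_less[OF assms] by fastforce
qed simp

lemma relpow_tedges_le_Max:
  assumes "sorted_leaves t" and "(u, v) \<in> tedges t ^^ k"
  shows "k \<le> Max (set (leaves t))"
proof (cases "k = 0")
  case False
  then have "(u, v) \<in> (tedges t)\<^sup>+"
    using assms(2) trancl_power by blast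
  then have "v \<in> set (leaves t)"
    using tedges_subset_leaves[of t] by (auto dest: tranclD2)
  then have "v \<le> Max (set (leaves t))"
    by simp
  then show ?thesis
    using relpow_tedges_add_le[OF assms] by linarith
qed simp

lemma relpow_le_height:
  assumes "sorted_leaves t" and "(u, v) \<in> tedges t ^^ k"
  shows "k \<le> height t u"
  unfolding height_def
proof (rule Greatest_le_nat[where b = "Max (set (leaves t))"])
  show "\<exists>v. (u, v) \<in> tedges t ^^ k"
    using assms(2) by blast
  show "j \<le> Max (set (leaves t))" if "\<exists>v. (u, v) \<in> tedges t ^^ j" for j
    using that relpow_tedges_le_Max[OF assms(1)] by blast
qed

lemma relpow_height:
  assumes "sorted_leaves t"
  shows "\<exists>v. (u, v) \<in> tedges t ^^ height t u"
  unfolding height_def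
proof (rule GreatestI_nat[where k = 0 and b = "Max (set (leaves t))"])
  show "\<exists>v. (u, v) \<in> tedges t ^^ 0"
    by simp
  show "j \<le> Max (set (leaves t))" if "\<exists>v. (u, v) \<in> tedges t ^^ j" for j
    using that relpow_tedges_le_Max[OF assms] by blast
qed

lemma height_le_Max: "sorted_leaves t \<Longrightarrow> height t u \<le> Max (set (leaves t))"
  using relpow_height relpow_tedges_le_Max by blast

lemma height_child_less:
  assumes "sorted_leaves t" and "(x, c) \<in> tedges t"
  shows "height t c < height t x"
proof -
  obtain v where "(c, v) \<in> tedges t ^^ height t c"
    using relpow_height[OF assms(1)] by blast
  then have "(x, v) \<in> tedges t ^^ Suc (height t c)"
    using assms(2) by (rule relpow_Suc_I2[rotated])
  then show ?thesis
    using relpow_le_height[OF assms(1)] by fastforce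
qed

text \<open>Distance from the root of \<open>G(t)\<close>: the tree of a right argument hangs one edge
  below the root.\<close>
primrec depth :: "bterm \<Rightarrow> nat \<Rightarrow> nat" where
  "depth (Var i) v = 0"
| "depth (App a b) v = (if v \<in> set (leaves a) then depth a v else Suc (depth b v))"

lemma depth_leftmost: "depth t (leftmost t) = 0"
  by (induction t) (auto simp: leftmost_in_leaves)

lemma depth_tedges: "sorted_leaves t \<Longrightarrow> (u, v) \<in> tedges t \<Longrightarrow> depth t v = Suc (depth t u)"
proof (induction t)
  case (App a b)
  have disj: "x \<in> set (leaves b) \<Longrightarrow> x \<notin> set (leaves a)" for x
    using App.prems(1) by (auto simp: sorted_wrt_append)
  from App.prems(2) consider "(u, v) \<in> tedges a" | "(u, v) \<in> tedges b"
    | "u = leftmost a" "v = leftmost b"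
    by auto
  then show ?case
  proof cases
    case 1
    then show ?thesis
      using App tedges_subset_leaves[of a] by (auto simp: sorted_wrt_append)
  next
    case 2
    then show ?thesis
      using App tedges_subset_leaves[of b] disj by (auto simp: sorted_wrt_append)
  next
    case 3
    then show ?thesis
      using leftmost_in_leaves[of a] leftmost_in_leaves[of b] disj depth_leftmost[of a]
        depth_leftmost[of b] by simp
  qed
qed simp

lemma depth_relpow:
  "sorted_leaves t \<Longrightarrow> (u, v) \<in> tedges t ^^ k \<Longrightarrow> depth t v = depth t u + k"
proof (induction k arbitrary: v)
  case (Suc k)
  then obtain w where "(u, w) \<in> tedges t ^^ k" "(w, v) \<in> tedges t"
    by auto
  then show ?case
    using Suc depth_tedges by fastforce
qed simp

lemma depth_desc:
  assumes "sorted_leaves t" and "y \<in> desc t z"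
  shows "depth t z \<le> depth t y \<and> depth t y \<le> depth t z + height t z"
proof -
  obtain k where k: "(z, y) \<in> tedges t ^^ k"
    using assms(2) by (auto simp: desc_def rtrancl_power)
  show ?thesis
    using depth_relpow[OF assms(1) k] relpow_le_height[OF assms(1) k] by simp
qed

lemma tedges_into_desc:
  assumes "sorted_leaves t" and "(u, v) \<in> tedges t" and "v \<in> desc t z" and "u \<notin> desc t z"
  shows "v = z"
proof (rule ccontr)
  assume "v \<noteq> z"
  moreover have "(z, v) \<in> (tedges t)\<^sup>*"
    using assms(3) by (simp add: desc_def)
  ultimately obtain q where "(z, q) \<in> (tedges t)\<^sup>*" and q: "(q, v) \<in> tedges t"
    by (blast elim: rtranclE)
  moreover have "q = u"
    using tedges_parent_unique[OF assms(1) q assms(2)] .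
  ultimately show False
    using assms(4) by (simp add: desc_def)
qed

lemma tedges_sibling_desc:
  assumes "sorted_leaves t" and "(x, c) \<in> tedges t" and "(x, b) \<in> tedges t" and "b \<in> desc t c"
  shows "c = b"
proof (rule ccontr)
  assume "c \<noteq> b"
  moreover have "(c, b) \<in> (tedges t)\<^sup>*"
    using assms(4) by (simp add: desc_def)
  ultimately obtain q where cq: "(c, q) \<in> (tedges t)\<^sup>*" and q: "(q, b) \<in> tedges t"
    by (blast elim: rtranclE)
  have "q = x"
    using tedges_parent_unique[OF assms(1) q assms(3)] .
  then show False
    using rtrancl_tedges_le[OF assms(1) cq] tedges_less[OF assms(1,2)] by simp
qed

lemma subtree_eq_iff:
  "subtree t x = subtree t' x \<longleftrightarrow>
     desc t x = desc t' x \<and> Restr (tedges t) (desc t x) = Restr (tedges t') (desc t' x)"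
  by (simp add: subtree_def)

lemma tedges_App_root_le:
  assumes "sorted_leaves (App a b)" and "(leftmost a, c) \<in> tedges (App a b)"
  shows "c \<le> leftmost b"
proof -
  have ab: "\<forall>x\<in>set (leaves a). \<forall>y\<in>set (leaves b). x < y"
    using assms(1) by (simp add: sorted_wrt_append)
  then have "(leftmost a, c) \<notin> tedges b"
    using tedges_subset_leaves[of b] leftmost_in_leaves[of a] by blast
  then have "c = leftmost b \<or> c \<in> set (leaves a)"
    using assms(2) tedges_subset_leaves[of a] by auto
  then show ?thesis
    using ab leftmost_in_leaves[of b] by (auto intro: less_imp_le)
qed

lemma takeWhile_leaves_App:
  assumes "sorted_leaves (App a b)"
  shows "takeWhile (\<lambda>v. v < leftmost b) (leaves (App a b)) = leaves a"
proof -
  have "takeWhile (\<lambda>v. v < leftmost b) (leaves a @ leaves b) =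
      leaves a @ takeWhile (\<lambda>v. v < leftmost b) (leaves b)"
    using assms leftmost_in_leaves[of b] by (intro takeWhile_append2) (auto simp: sorted_wrt_append)
  moreover have "leaves b = leftmost b # tl (leaves b)"
    using hd_leaves[of b] leaves_ne_Nil[of b] by (metis list.collapse)
  ultimately show ?thesis
    by (metis append.right_neutral leaves.simps(2) less_irrefl takeWhile.simps(2))
qed

lemma tedges_App_Restr:
  assumes "sorted_leaves (App a b)"
  shows "tedges a = Restr (tedges (App a b)) (set (leaves a))"
    and "tedges b = Restr (tedges (App a b)) (set (leaves b))"
proof -
  have disj: "set (leaves a) \<inter> set (leaves b) = {}"
    using assms by (auto simp: sorted_wrt_append)
  then show "tedges a = Restr (tedges (App a b)) (set (leaves a))"
    and "tedges b = Restr (tedges (App a b)) (set (leaves b))"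
    using tedges_subset_leaves[of a] tedges_subset_leaves[of b]
      leftmost_in_leaves[of a] leftmost_in_leaves[of b] by auto
qed

text \<open>The term is recovered from its tree: the root of the right argument is the
  largest child of the root, and it splits the leaves.\<close>
lemma tedges_inj:
  "leaves s = leaves s' \<Longrightarrow> sorted_leaves s \<Longrightarrow> tedges s = tedges s' \<Longrightarrow> s = s'"
proof (induction s arbitrary: s')
  case (Var i)
  then show ?case by (cases s') (auto simp: leaves_ne_Nil)
next
  case (App a b)
  obtain a' b' where s': "s' = App a' b'"
    using App.prems(1) leaves_ne_Nil[of a] leaves_ne_Nil[of b]
    by (cases s') (auto simp: append_eq_Cons_conv)
  have sorted: "sorted_leaves (App a b)" "sorted_leaves (App a' b')"
    using App.prems(1,2) s' by simp_all
  have E: "tedges (App a b) = tedges (App a' b')" and L: "leaves (App a b) = leaves (App a' b')"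
    using App.prems(1,3) s' by simp_all
  have root: "leftmost a = leftmost a'"
    using L hd_leaves[of "App a b"] hd_leaves[of "App a' b'"] by simp
  have "(leftmost a, leftmost b') \<in> tedges (App a b)" "(leftmost a', leftmost b) \<in> tedges (App a' b')"
    using E root by auto
  then have split: "leftmost b = leftmost b'"
    using tedges_App_root_le[OF sorted(1)] tedges_App_root_le[OF sorted(2)] root by (meson le_antisym)
  have la: "leaves a = leaves a'"
    using takeWhile_leaves_App[OF sorted(1)] takeWhile_leaves_App[OF sorted(2)] L split by metis
  then have lb: "leaves b = leaves b'"
    using L by simp
  have sa: "sorted_leaves a" and sb: "sorted_leaves b"
    using sorted(1) by (simp_all add: sorted_wrt_append)
  have "tedges a = tedges a'"
    using tedges_App_Restr(1)[OF sorted(1)] tedges_App_Restr(1)[OF sorted(2)] E la by simp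
  then have "a = a'"
    using App.IH(1)[OF la sa] by blast
  moreover have "tedges b = tedges b'"
    using tedges_App_Restr(2)[OF sorted(1)] tedges_App_Restr(2)[OF sorted(2)] E lb by simp
  then have "b = b'"
    using App.IH(2)[OF lb sb] by blast
  ultimately show ?case
    using s' by simp
qed

section \<open>Outlets and homomorphisms into the digraph\<close>

lemma in_trivial_scc_not_on_cycle:
  assumes "E \<subseteq> V \<times> V" and "in_trivial_scc V E v"
  shows "(v, v) \<notin> E\<^sup>+"
proof
  assume "(v, v) \<in> E\<^sup>+"
  then obtain w where vw: "(v, w) \<in> E" and wv: "(w, v) \<in> E\<^sup>*"
    by (blast dest: tranclD)
  obtain K where K: "is_scc V E K" "trivial_scc E K" "v \<in> K"
    using assms(2) by (auto simp: in_trivial_scc_def)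
  then have "K = {v}" and "(v, v) \<notin> E"
    by (auto simp: trivial_scc_def)
  moreover have "K = {x \<in> V. (v, x) \<in> E\<^sup>* \<and> (x, v) \<in> E\<^sup>*}"
    using K(1,3) by (auto simp: is_scc_def)
  moreover have "w \<in> V"
    using vw assms(1) by auto
  ultimately show False
    using vw wv by auto
qed

lemma nontrivial_scc_on_cycle:
  assumes "nontrivial_scc V E K" and "v \<in> K"
  shows "(v, v) \<in> E\<^sup>+"
proof (cases "(v, v) \<in> E")
  case False
  have K: "K = {x \<in> V. (v, x) \<in> E\<^sup>* \<and> (x, v) \<in> E\<^sup>*}" and "\<not> trivial_scc E K"
    using assms by (auto simp: nontrivial_scc_def is_scc_def)
  then have "K \<noteq> {v}"
    using False by (auto simp: trivial_scc_def)
  then obtain u where "u \<in> K" "u \<noteq> v"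
    using assms(2) by blast
  then have "(v, u) \<in> E\<^sup>+" "(u, v) \<in> E\<^sup>*"
    using K by (auto simp: rtrancl_eq_or_trancl)
  then show ?thesis
    by auto
qed auto

text \<open>Running around a closed walk through \<open>v\<close> forever, with the phase chosen so
  that the walk is at \<open>v\<close> at time \<open>d\<close>.\<close>
lemma cycle_infinite_walk:
  assumes "(v, v) \<in> E\<^sup>+"
  obtains F where "\<And>i. (F i, F (Suc i)) \<in> E" and "\<And>i. (F i, v) \<in> E\<^sup>*" and "F d = v"
proof -
  obtain p where p: "0 < p" "(v, v) \<in> E ^^ p"
    using assms trancl_power by blast
  then obtain w where w: "w 0 = v" "w p = v" "\<forall>i<p. (w i, w (Suc i)) \<in> E"
    using relpow_fun_conv by metis
  define G where "G i = w (i mod p)" for i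
  have G_step: "(G i, G (Suc i)) \<in> E" for i
  proof (cases "Suc (i mod p) = p")
    case True
    then have "Suc i mod p = 0"
      by (simp add: mod_Suc)
    then show ?thesis
      using w True p unfolding G_def by (metis mod_less_divisor)
  next
    case False
    then have "Suc i mod p = Suc (i mod p)"
      by (simp add: mod_Suc)
    then show ?thesis
      using w p unfolding G_def by simp
  qed
  have G_reach: "(G i, v) \<in> E\<^sup>*" for i
  proof -
    have "(w (i mod p), w p) \<in> E ^^ (p - i mod p)"
      unfolding relpow_fun_conv using w(3) p
      by (intro exI[of _ "\<lambda>k. w (i mod p + k)"]) auto
    then show ?thesis
      using w(2) unfolding G_def by (metis relpow_imp_rtrancl)
  qed
  have "G (d + (p * d - d)) = v"
    using w(1) p by (simp add: G_def)
  then show ?thesis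
    using that[of "\<lambda>i. G (i + (p * d - d))"] G_step G_reach by simp
qed

lemma is_path_rtrancl:
  assumes "is_path V E vs" and "i < length vs"
  shows "(vs ! 0, vs ! i) \<in> E\<^sup>*"
  using assms(2)
proof (induction i)
  case (Suc i)
  then have "(vs ! i, vs ! Suc i) \<in> E"
    using assms(1) by (simp add: is_path_def)
  then show ?case
    using Suc by (meson Suc_lessD rtrancl.rtrancl_into_rtrancl)
qed simp

lemma outlet_tail_trivial:
  assumes "is_outlet V E K vs" and "0 < i" and "i < length vs"
  shows "in_trivial_scc V E (vs ! i)"
proof -
  have "tl vs ! (i - 1) = vs ! i"
    using assms(2,3) by (simp add: nth_tl)
  moreover have "tl vs ! (i - 1) \<in> set (tl vs)"
    using assms(2,3) by simp
  ultimately show ?thesis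
    using assms(1) by (auto simp: is_outlet_def)
qed

abbreviation tree_hom :: "('v \<times> 'v) set \<Rightarrow> (nat \<Rightarrow> 'v) \<Rightarrow> bterm \<Rightarrow> bool" where
  "tree_hom E \<phi> t \<equiv> \<forall>(a, b) \<in> tedges t. (\<phi> a, \<phi> b) \<in> E"

lemma eval_Some_assignment:
  "eval E (\<lambda>i. Some (\<phi> i)) t =
     (if tree_hom E \<phi> t then Some (\<phi> (leftmost t)) else None)"
  by (induction t) auto

lemma satisfies_tedges_hom:
  assumes "satisfies V E t t'" and "range \<phi> \<subseteq> V" and "tree_hom E \<phi> t"
  shows "tree_hom E \<phi> t'"
proof -
  have "eval E (\<lambda>i. Some (\<phi> i)) t = eval E (\<lambda>i. Some (\<phi> i)) t'"
    using spec[OF assms(1)[unfolded satisfies_def], of "\<lambda>i. Some (\<phi> i)"] assms(2) by auto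
  then show ?thesis
    using assms(3) by (simp add: eval_Some_assignment split: if_splits)
qed

definition walk_labelling :: "bterm \<Rightarrow> nat \<Rightarrow> (nat \<Rightarrow> 'v) \<Rightarrow> (nat \<Rightarrow> 'v) \<Rightarrow> nat \<Rightarrow> 'v" where
  "walk_labelling R z w F y =
     (if y \<in> desc R z then w (depth R y - depth R z + 1) else F (depth R y))"

lemma walk_labelling_tedges:
  assumes R: "sorted_leaves R"
    and F: "\<And>i. (F i, F (Suc i)) \<in> E" and F_parent: "F (depth R z - 1) = w 0"
    and w: "\<And>i. i < l \<Longrightarrow> (w i, w (Suc i)) \<in> E" and h: "height R z < l"
    and e: "(u, v) \<in> tedges R"
  shows "(walk_labelling R z w F u, walk_labelling R z w F v) \<in> E"
proof -
  have dv: "depth R v = Suc (depth R u)"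
    using depth_tedges[OF R e] .
  consider "u \<in> desc R z" "v \<in> desc R z" | "u \<notin> desc R z" "v \<notin> desc R z"
    | "u \<notin> desc R z" "v \<in> desc R z" | "u \<in> desc R z" "v \<notin> desc R z"
    by blast
  then show ?thesis
  proof cases
    case 1
    have "depth R z \<le> depth R u" and "depth R v \<le> depth R z + height R z"
      using depth_desc[OF R 1(1)] depth_desc[OF R 1(2)] by simp_all
    then have "depth R u - depth R z + 1 < l"
      and "depth R v - depth R z + 1 = Suc (depth R u - depth R z + 1)"
      using dv h by arith+
    then show ?thesis
      using w 1 by (simp add: walk_labelling_def)
  next
    case 2
    then show ?thesis
      using F dv by (simp add: walk_labelling_def)
  next
    case 3
    then have "v = z"
      using tedges_into_desc[OF R e] by blast
    then have "depth R u = depth R z - 1"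
      using dv by simp
    then show ?thesis
      using 3 \<open>v = z\<close> F_parent w[of 0] h by (simp add: walk_labelling_def)
  next
    case 4
    have "v \<in> desc R z"
      using 4(1) e unfolding desc_def by (simp add: rtrancl_into_rtrancl)
    with 4(2) show ?thesis
      by contradiction
  qed
qed

lemma outlet_labelling_hom:
  assumes EV: "E \<subseteq> V \<times> V" and R: "sorted_leaves R"
    and out: "is_outlet V E K vs" and h: "height R z < length vs - 1"
  obtains F where "\<forall>i. (F i, vs ! 0) \<in> E\<^sup>*"
    and "range (walk_labelling R z ((!) vs) F) \<subseteq> V"
    and "tree_hom E (walk_labelling R z ((!) vs) F) R"
proof -
  have path: "is_path V E vs" and K: "nontrivial_scc V E K" "vs ! 0 \<in> K"
    using out by (auto simp: is_outlet_def is_path_def hd_conv_nth)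
  obtain F where F: "\<And>i. (F i, F (Suc i)) \<in> E" "\<And>i. (F i, vs ! 0) \<in> E\<^sup>*"
    and F_parent: "F (depth R z - 1) = vs ! 0"
    using cycle_infinite_walk[OF nontrivial_scc_on_cycle[OF K], where d = "depth R z - 1"] by blast
  have step: "(vs ! i, vs ! Suc i) \<in> E" if "i < length vs - 1" for i
    using path that by (simp add: is_path_def)
  have "range (walk_labelling R z ((!) vs) F) \<subseteq> V"
  proof (rule image_subsetI)
    fix y
    show "walk_labelling R z ((!) vs) F y \<in> V"
    proof (cases "y \<in> desc R z")
      case True
      then have "depth R y - depth R z + 1 < length vs"
        using depth_desc[OF R True] h by linarith
      then show ?thesis
        using True path by (auto simp: walk_labelling_def is_path_def)
    next
      case False
      then show ?thesis
        using F(1)[of "depth R y"] EV by (auto simp: walk_labelling_def)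
    qed
  qed
  moreover have "tree_hom E (walk_labelling R z ((!) vs) F) R"
    using walk_labelling_tedges[where w = "(!) vs", OF R F(1) F_parent step h] by blast
  ultimately show ?thesis
    using that F(2) by blast
qed

lemma satisfies_desc_closed:
  assumes EV: "E \<subseteq> V \<times> V" and R: "sorted_leaves R" and sat: "satisfies V E R R'"
    and out: "is_outlet V E K vs" and h: "height R z < length vs - 1"
  shows "tedges R' `` desc R z \<subseteq> desc R z"
proof
  fix b assume "b \<in> tedges R' `` desc R z"
  then obtain a where ab: "(a, b) \<in> tedges R'" and a: "a \<in> desc R z"
    by blast
  obtain F where F: "\<forall>i. (F i, vs ! 0) \<in> E\<^sup>*"
    and V: "range (walk_labelling R z ((!) vs) F) \<subseteq> V"
    and hom: "tree_hom E (walk_labelling R z ((!) vs) F) R"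
    using outlet_labelling_hom[OF EV R out h] .
  have hom': "(walk_labelling R z ((!) vs) F a, walk_labelling R z ((!) vs) F b) \<in> E"
    using satisfies_tedges_hom[OF sat V hom] ab by blast
  show "b \<in> desc R z"
  proof (rule ccontr)
    assume b: "b \<notin> desc R z"
    define i where "i = depth R a - depth R z + 1"
    have i: "0 < i" "i < length vs"
      using depth_desc[OF R a] h by (simp_all add: i_def) linarith
    have "(vs ! i, F (depth R b)) \<in> E"
      using hom' a b by (simp add: walk_labelling_def i_def)
    moreover have "(F (depth R b), vs ! i) \<in> E\<^sup>*"
      using F is_path_rtrancl[OF _ i(2)] out by (auto simp: is_outlet_def intro: rtrancl_trans)
    ultimately have "(vs ! i, vs ! i) \<in> E\<^sup>+"
      by (rule rtrancl_into_trancl2)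
    then show False
      using in_trivial_scc_not_on_cycle[OF EV outlet_tail_trivial[OF out i]] by blast
  qed
qed

section \<open>Comparing the trees of two terms\<close>

lemma desc_trans: "b \<in> desc t a \<Longrightarrow> c \<in> desc t b \<Longrightarrow> c \<in> desc t a"
  by (auto simp: desc_def)

lemma desc_through_child: "y \<in> desc t x \<Longrightarrow> y \<noteq> x \<Longrightarrow> \<exists>c. (x, c) \<in> tedges t \<and> y \<in> desc t c"
  by (auto simp: desc_def elim: converse_rtranclE)

lemma desc_subset_if_closed: "tedges t `` A \<subseteq> A \<Longrightarrow> x \<in> A \<Longrightarrow> desc t x \<subseteq> A"
  using Image_closed_trancl[of "tedges t" A] by (auto simp: desc_def)

lemma relpow_reachable_transfer:
  assumes "Restr R {v. (x, v) \<in> R\<^sup>*} \<subseteq> R'" and "(x, u) \<in> R\<^sup>*"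
  shows "(u, y) \<in> R ^^ j \<Longrightarrow> (u, y) \<in> R' ^^ j"
proof (induction j arbitrary: y)
  case (Suc j)
  then obtain y' where y': "(u, y') \<in> R ^^ j" "(y', y) \<in> R"
    by auto
  then have "(x, y') \<in> R\<^sup>*"
    using assms(2) by (meson relpow_imp_rtrancl rtrancl_trans)
  then have "(y', y) \<in> R'"
    using assms(1) y'(2) by (auto intro: rtrancl_into_rtrancl)
  then show ?case
    using Suc.IH[OF y'(1)] by auto
qed simp

lemma height_le_if_desc_subset:
  assumes S: "sorted_leaves S" and S': "sorted_leaves S'"
    and sub: "desc S' x \<subseteq> desc S x"
    and children: "\<And>c. (x, c) \<in> tedges S \<Longrightarrow> subtree S c = subtree S' c"
  shows "height S' x \<le> height S x"
proof (cases "height S' x")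
  case (Suc j)
  obtain y where "(x, y) \<in> tedges S' ^^ Suc j"
    using relpow_height[OF S', of x] Suc by auto
  then obtain u where u: "(x, u) \<in> tedges S'" "(u, y) \<in> tedges S' ^^ j"
    by (blast dest: relpow_Suc_D2)
  have "u \<in> desc S x"
    using sub u(1) by (auto simp: desc_def)
  moreover have "u \<noteq> x"
    using tedges_less[OF S' u(1)] by simp
  ultimately obtain c where c: "(x, c) \<in> tedges S" "u \<in> desc S c"
    using desc_through_child by blast
  have eq: "desc S c = desc S' c" "Restr (tedges S) (desc S c) = Restr (tedges S') (desc S' c)"
    using children[OF c(1)] unfolding subtree_eq_iff by blast+
  have "Restr (tedges S') (desc S' c) \<subseteq> tedges S" and "u \<in> desc S' c"
    using eq c(2) by blast+
  then have "(u, y) \<in> tedges S ^^ j"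
    by (intro relpow_reachable_transfer[OF _ _ u(2)]) (simp_all add: desc_def)
  moreover obtain i where "(c, u) \<in> tedges S ^^ i"
    using c(2) by (auto simp: desc_def rtrancl_power)
  ultimately have "(c, y) \<in> tedges S ^^ (i + j)"
    by (auto simp: relpow_add)
  then have "i + j \<le> height S c"
    using relpow_le_height[OF S] by blast
  then show ?thesis
    using height_child_less[OF S c(1)] Suc by simp
qed simp

lemma tedges_child_preserved:
  assumes S: "sorted_leaves S" and S': "sorted_leaves S'" and eq: "desc S x = desc S' x"
    and children: "\<And>c. (x, c) \<in> tedges S \<Longrightarrow> subtree S c = subtree S' c"
    and xb: "(x, b) \<in> tedges S"
  shows "(x, b) \<in> tedges S'"
proof -
  have "b \<in> desc S' x" "b \<noteq> x"
    using eq xb tedges_less[OF S xb] by (auto simp: desc_def)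
  then obtain u where u: "(x, u) \<in> tedges S'" "b \<in> desc S' u"
    using desc_through_child by blast
  have "u \<in> desc S x" "u \<noteq> x"
    using eq u(1) tedges_less[OF S' u(1)] by (auto simp: desc_def)
  then obtain c where c: "(x, c) \<in> tedges S" "u \<in> desc S c"
    using desc_through_child by blast
  have c_eq: "desc S c = desc S' c"
    using children[OF c(1)] by (simp add: subtree_eq_iff)
  have "b \<in> desc S c"
    using desc_trans[of u S' c b] c(2) u(2) c_eq by simp
  then have "c = b"
    using tedges_sibling_desc[OF S c(1) xb] by simp
  have "u \<in> desc S' b" and "b \<in> desc S' u"
    using c(2) c_eq \<open>c = b\<close> u(2) by simp_all
  then have "u = b"
    using rtrancl_tedges_le[OF S'] unfolding desc_def by (meson le_antisym mem_Collect_eq)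
  then show ?thesis
    using u(1) by simp
qed

lemma tedges_Restr_desc_subset:
  assumes S: "sorted_leaves S" and S': "sorted_leaves S'" and eq: "desc S x = desc S' x"
    and children: "\<And>c. (x, c) \<in> tedges S \<Longrightarrow> subtree S c = subtree S' c"
  shows "Restr (tedges S) (desc S x) \<subseteq> tedges S'"
proof clarify
  fix a b assume ab: "(a, b) \<in> tedges S" and a: "a \<in> desc S x" and b: "b \<in> desc S x"
  show "(a, b) \<in> tedges S'"
  proof (cases "a = x")
    case True
    then show ?thesis
      using tedges_child_preserved[OF S S' eq children] ab by simp
  next
    case False
    then obtain c where c: "(x, c) \<in> tedges S" "a \<in> desc S c"
      using a desc_through_child by blast
    moreover have "b \<in> desc S c"
      using c(2) ab unfolding desc_def by (blast intro: rtrancl_into_rtrancl)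
    ultimately have "(a, b) \<in> Restr (tedges S) (desc S c)"
      using ab by blast
    then show ?thesis
      using children[OF c(1)] unfolding subtree_eq_iff by blast
  qed
qed

text \<open>One step of the induction on heights: the closure properties force the two
  subtrees of \<open>x\<close> to have the same vertices, and the agreement of the lower subtrees
  then forces the same edges.\<close>
lemma subtree_eq_if_desc_closed:
  assumes S: "sorted_leaves S" and S': "sorted_leaves S'"
    and closed: "\<And>z. height S z \<le> L \<Longrightarrow> tedges S' `` desc S z \<subseteq> desc S z"
    and closed': "\<And>z. height S' z \<le> L \<Longrightarrow> tedges S `` desc S' z \<subseteq> desc S' z"
    and x: "height S x \<le> L"
    and lower: "\<And>y. height S y < height S x \<or> height S' y < height S x \<Longrightarrow>
      subtree S y = subtree S' y"
  shows "subtree S x = subtree S' x"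
proof -
  have root: "x \<in> desc S x" "x \<in> desc S' x"
    by (simp_all add: desc_def)
  have children: "subtree S c = subtree S' c" if "(x, c) \<in> tedges S" for c
    using lower height_child_less[OF S that] by blast
  have sub: "desc S' x \<subseteq> desc S x"
    using desc_subset_if_closed[OF closed[OF x] root(1)] .
  have h: "height S' x \<le> height S x"
    using height_le_if_desc_subset[OF S S' sub children] .
  have eq: "desc S x = desc S' x"
    using sub desc_subset_if_closed[OF closed' root(2)] h x by (meson order_trans subset_antisym)
  have children': "subtree S' c = subtree S c" if "(x, c) \<in> tedges S'" for c
  proof -
    have "height S' c < height S x"
      using height_child_less[OF S' that] h by simp
    then show ?thesis
      using lower[of c] by simp
  qed
  have "Restr (tedges S) (desc S x) \<subseteq> tedges S'"
    using tedges_Restr_desc_subset[OF S S' eq children] .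
  moreover have "Restr (tedges S') (desc S' x) \<subseteq> tedges S"
    using tedges_Restr_desc_subset[OF S' S eq[symmetric] children'] .
  ultimately show ?thesis
    unfolding subtree_eq_iff using eq by blast
qed

lemma subtree_eq_below_height:
  assumes t: "sorted_leaves t" and t': "sorted_leaves t'"
    and closed: "\<And>z. height t z \<le> L \<Longrightarrow> tedges t' `` desc t z \<subseteq> desc t z"
    and closed': "\<And>z. height t' z \<le> L \<Longrightarrow> tedges t `` desc t' z \<subseteq> desc t' z"
    and x: "height t x \<le> L \<or> height t' x \<le> L"
  shows "subtree t x = subtree t' x"
proof -
  have "subtree t x = subtree t' x" if "min (height t x) (height t' x) = H" "H \<le> L" for H x
    using that
  proof (induction H arbitrary: x rule: less_induct)
    case (less H)
    have lower: "subtree t y = subtree t' y" if "height t y < H \<or> height t' y < H" for y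
    proof -
      have "min (height t y) (height t' y) < H"
        using that by linarith
      then show ?thesis
        using less.IH less.prems(2) by simp
    qed
    show ?case
    proof (cases "height t x \<le> height t' x")
      case True
      then have H: "height t x = H"
        using less.prems(1) by simp
      show ?thesis
        by (rule subtree_eq_if_desc_closed[OF t t' closed closed'])
          (use H less.prems(2) lower in simp_all)
    next
      case False
      then have H: "height t' x = H"
        using less.prems(1) by simp
      have "subtree t' x = subtree t x"
        by (rule subtree_eq_if_desc_closed[OF t' t closed' closed])
          (use H less.prems(2) lower in auto)
      then show ?thesis
        by simp
    qed
  qed
  then show ?thesis
    using x by fastforce
qed

lemma Greatest_le_int:
  fixes P :: "int \<Rightarrow> bool"
  assumes "P k" and bound: "\<And>m. P m \<Longrightarrow> m \<le> b"
  shows "k \<le> (GREATEST m. P m)"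
proof -
  define A where "A = {m. P m \<and> k \<le> m}"
  have A: "finite A" "k \<in> A"
    using assms by (auto simp: A_def intro: finite_subset[of _ "{k..b}"])
  have "(GREATEST m. P m) = Max A"
  proof (rule Greatest_equality)
    show "P (Max A)"
      using Max_in[OF A(1)] A(2) by (auto simp: A_def)
    show "m \<le> Max A" if "P m" for m
      using that Max_ge[OF A(1) A(2)] Max_ge[OF A(1), of m] by (cases "k \<le> m") (auto simp: A_def)
  qed
  then show ?thesis
    using Max_ge[OF A] by simp
qed

lemma subtrees_eq_imp_eq:
  assumes "sorted_leaves t" and "leaves t' = leaves t"
    and "\<And>x. x \<in> tverts t \<Longrightarrow> subtree t x = subtree t' x"
  shows "t = t'"
proof -
  have edge: "(a, b) \<in> Restr (tedges s) (desc s a)" if "(a, b) \<in> tedges s" for s a b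
    using that by (auto simp: desc_def)
  have tail: "a \<in> tverts s" if "(a, b) \<in> tedges s" for s a b
    using that tedges_subset_leaves[of s] by (auto simp: tverts_def)
  have "tedges t \<subseteq> tedges t'"
  proof clarify
    fix a b assume "(a, b) \<in> tedges t"
    then show "(a, b) \<in> tedges t'"
      using edge tail assms(3) unfolding subtree_eq_iff by blast
  qed
  moreover have "tedges t' \<subseteq> tedges t"
  proof clarify
    fix a b assume "(a, b) \<in> tedges t'"
    moreover have "a \<in> tverts t"
      using tail[OF calculation] assms(2) by (simp add: tverts_def)
    ultimately show "(a, b) \<in> tedges t"
      using edge assms(3) unfolding subtree_eq_iff by blast
  qed
  ultimately show ?thesis
    using tedges_inj assms(1,2) by (metis subset_antisym)
qed

lemma le_Y:
  assumes "sorted_leaves t" and "leaves t' = leaves t" and "t \<noteq> t'"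
    and "\<forall>x \<in> tverts t. (int (height t x) \<le> m \<or> int (height t' x) \<le> m) \<longrightarrow>
      subtree t x = subtree t' x"
  shows "m \<le> Y t t'"
  unfolding Y_def
proof (rule Greatest_le_int[where b = "int (Max (set (leaves t)))"])
  fix m' assume m': "\<forall>x \<in> tverts t. (int (height t x) \<le> m' \<or> int (height t' x) \<le> m') \<longrightarrow>
    subtree t x = subtree t' x"
  show "m' \<le> int (Max (set (leaves t)))"
  proof (rule ccontr)
    assume "\<not> ?thesis"
    then have "subtree t x = subtree t' x" if "x \<in> tverts t" for x
      using m' that height_le_Max[OF assms(1), of x] by fastforce
    then show False
      using subtrees_eq_imp_eq[OF assms(1,2)] assms(3) by blast
  qed
qed (use assms(4) in blast)

lemma outlet_length_le_Y:
  assumes EV: "E \<subseteq> V \<times> V" and t: "sorted_leaves t" and same: "leaves t' = leaves t"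
    and "t \<noteq> t'" and sat: "satisfies V E t t'" and out: "is_outlet V E K vs"
  shows "int (length vs - 1) \<le> Y t t' + 1"
proof (rule ccontr)
  assume long: "\<not> ?thesis"
  have t': "sorted_leaves t'"
    using t same by simp
  have sat': "satisfies V E t' t"
    using sat by (auto simp: satisfies_def)
  have "-1 \<le> Y t t'"
    by (rule le_Y[OF t same \<open>t \<noteq> t'\<close>]) simp
  define L where "L = nat (Y t t' + 1)"
  have L: "int L = Y t t' + 1" "L < length vs - 1"
    using \<open>-1 \<le> Y t t'\<close> long by (simp_all add: L_def)
  have "subtree t x = subtree t' x" if "height t x \<le> L \<or> height t' x \<le> L" for x
  proof (rule subtree_eq_below_height[OF t t' _ _ that])
    show "tedges t' `` desc t z \<subseteq> desc t z" if "height t z \<le> L" for z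
      using satisfies_desc_closed[OF EV t sat out] that L(2) by simp
    show "tedges t `` desc t' z \<subseteq> desc t' z" if "height t' z \<le> L" for z
      using satisfies_desc_closed[OF EV t' sat' out] that L(2) by simp
  qed
  then have "Y t t' + 1 \<le> Y t t'"
    using le_Y[OF t same \<open>t \<noteq> t'\<close>, of "Y t t' + 1"] L(1) by (metis of_nat_le_iff)
  then show False
    by simp
qed

theorem lemma6p10:
  fixes V :: "'v set" and E :: "('v \<times> 'v) set" and t t' :: bterm and n :: nat
  assumes "E \<subseteq> V \<times> V"
    and "t \<in> B n" and "t' \<in> B n" and "t \<noteq> t'"
    and "satisfies V E t t'"
  shows "O_G V E \<le> ereal (real_of_int (Y t t' + 1))"
proof -
  have leaves: "leaves t = [1..<n+1]" "leaves t' = [1..<n+1]"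
    using assms(2,3) by (simp_all only: B_def mem_Collect_eq)
  have sorted: "sorted_leaves t" and same: "leaves t' = leaves t"
    unfolding leaves by (rule sorted_wrt_upt, rule refl)
  show ?thesis
    unfolding O_G_def
  proof (rule Sup_least, clarify)
    fix vs K assume "is_outlet V E K vs"
    then have "int (length vs - 1) \<le> Y t t' + 1"
      using outlet_length_le_Y[OF assms(1) sorted same assms(4,5)] by blast
    then show "ereal (real (length vs - 1)) \<le> ereal (real_of_int (Y t t' + 1))"
      by simp
  qed
qed

end
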